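(* For any CQAP $Q$ whose fracture $Q_\dagger$ is hierarchical, with static width $\mathsf w=\mathsf w(Q)$ and dynamic width $\delta=\delta(Q)$, either $\delta=\mathsf w$ or $\delta=\mathsf w-1$.
   Context: CQAP. A conjunctive query with free access patterns (CQAP) has the form $Q(\mathcal O\mid\mathcal I)=R_1(\mathcal X_1),\dots,R_n(\mathcal X_n)$, where $R_i(\mathcal X_i)$ are atoms, $\mathit{vars}(Q)=\bigcup_i\mathcal X_i$, and the free variables $\mathcal O\cup\mathcal I\subseteq\mathit{vars}(Q)$ are partitioned into input variables $\mathcal I$ and output variables $\mathcal O$ (either may be empty); the other variables are bound. $\mathit{atoms}(X)$ denotes the set of atoms whose schema contains $X$. A CQAP is hierarchical if for all variables $A,B$: $\mathit{atoms}(A)\subseteq\mathit{atoms}(B)$, or $\mathit{atoms}(B)\subseteq\mathit{atoms}(A)$, or $\mathit{atoms}(A)\cap\mathit{atoms}(B)=\emptyset$. Fracture. The fracture $Q_\dagger$ of $Q$ is obtained by: replacing every occurrence of an input variable in every atom by a distinct fresh variable; computing the connected components of the hypergraph of the resulting query (vertices = variables, hyperedges = atom schemas); within each connected component, replacing all fresh variables originating from the same input variable of $Q$ by one fresh input variable. Output and bound variables are unchanged. Variable orders. A variable order (VO) $\omega$ for a CQAP is a rooted forest with exactly one node per variable such that the variables of each atom lie on a common root-to-leaf path; $\mathit{dep}_\omega(X)$ is the set of ancestors $Y$ of $X$ that occur in a common atom with some variable of the subtree rooted at $X$. The extended VO adds leaves: each atom becomes a child of its lowest variable; then, processing variables bottom-up,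 at each variable $X$ with $\mathcal S=\{X\}\cup\mathit{dep}_\omega(X)$ and $\mathcal R$ the set of atoms below $X$, consider candidate indicator atoms $I_{\mathcal Z}R(\mathcal Z)$ for atoms $R(\mathcal Y)$ not in $\mathcal R$ with $\mathcal Z=\mathcal Y\cap\mathcal S\neq\emptyset$; run the GYO reduction (repeatedly delete a vertex occurring in only one hyperedge and a hyperedge contained in another) on the hypergraph whose hyperedges are the schemas of the candidates and of $\mathcal R$, and add as children of $X$ those candidates whose hyperedges survive in the fixpoint. All VOs are extended. A VO is access-top if no bound variable is an ancestor of a free variable and no output variable is an ancestor of an input variable. Widths. For a VO $\omega$ and variable $X$, $\omega_X$ is the subtree rooted at $X$ and $Q_X$ the join of all atoms and indicator atoms at the leaves of $\omega_X$. For a variable set $\mathcal F$, $\rho^*_{Q_X}(\mathcal F)$ is the minimum of $\sum_e\lambda_e$ over $\lambda_e\in[0,1]$ indexed by atoms $e$ of $Q_X$ subject to $\sum_{e\ni Y}\lambda_e\ge1$ for all $Y\in\mathcal F$ (so $\rho^*(\emptyset)=0$). $\mathsf w(\omega)=\max_X\rho^*_{Q_X}(\{X\}\cup\mathit{dep}_\omega(X))$ and $\delta(\omega)=\max_X\max_{R(\mathcal Y)}\rho^*_{Q_X}((\{X\}\cup\mathit{dep}_\omega(X))\setminus\mathcal Y)$, the inner maximum over atoms and indicator atoms $R(\mathcal Y)$ at leaves of $\omega_X$. For a CQAP $Q$, $(\delta(Q),\mathsf w(Q))$ is the lexicographically smallest pair $(\delta(\omega),\mathsf w(\omega))$ (first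 minimise $\delta$, then $\mathsf w$) over all access-top VOs $\omega$ of $Q_\dagger$. *)

theory Defs
  imports Complex_Main
begin

(* An atom R(x1,...,xk) is a relation symbol together with its list of variables.
   A query body is a list of atoms; atoms are identified by their position. *)
type_synonym ('r,'a) cq_atom = "'r \<times> 'a list"

definition schema :: "('r,'a) cq_atom list \<Rightarrow> nat \<Rightarrow> 'a set" where
  "schema Q j = set (snd (Q ! j))"

definition qvars :: "('r,'a) cq_atom list \<Rightarrow> 'a set" where
  "qvars Q = (\<Union>j<length Q. schema Q j)"

definition atoms_of :: "('r,'a) cq_atom list \<Rightarrow> 'a \<Rightarrow> nat set" where
  "atoms_of Q A = {j. j < length Q \<and> A \<in> schema Q j}"

definition hierarchical :: "('r,'a) cq_atom list \<Rightarrow> bool" where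
  "hierarchical Q \<longleftrightarrow> (\<forall>A B. atoms_of Q A \<subseteq> atoms_of Q B \<or> atoms_of Q B \<subseteq> atoms_of Q A
                           \<or> atoms_of Q A \<inter> atoms_of Q B = {})"

definition cqap :: "('r,'v) cq_atom list \<Rightarrow> 'v set \<Rightarrow> 'v set \<Rightarrow> bool" where
  "cqap Q Out Inp \<longleftrightarrow> Out \<inter> Inp = {} \<and> Out \<union> Inp \<subseteq> qvars Q"

(* after replacing every input-variable occurrence by a fresh variable, two atoms
   share a variable iff they share a non-input variable *)
definition frac_adj :: "('r,'v) cq_atom list \<Rightarrow> 'v set \<Rightarrow> (nat \<times> nat) set" where
  "frac_adj Q Inp = {(i,j). i < length Q \<and> j < length Q \<and> (schema Q i \<inter> schema Q j) - Inp \<noteq> {}}"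

definition frac_comp :: "('r,'v) cq_atom list \<Rightarrow> 'v set \<Rightarrow> nat \<Rightarrow> nat set" where
  "frac_comp Q Inp i = {j. (i,j) \<in> (frac_adj Q Inp)\<^sup>*}"

(* variables of the fracture: (X,{}) for non-input X; (A,C) is the fresh input variable
   obtained from input variable A within component C *)
definition frac_var :: "('r,'v) cq_atom list \<Rightarrow> 'v set \<Rightarrow> nat \<Rightarrow> 'v \<Rightarrow> 'v \<times> nat set" where
  "frac_var Q Inp i X = (if X \<in> Inp then (X, frac_comp Q Inp i) else (X, {}))"

definition fracture :: "('r,'v) cq_atom list \<Rightarrow> 'v set \<Rightarrow> ('r, 'v \<times> nat set) cq_atom list" where
  "fracture Q Inp = map (\<lambda>i. (fst (Q ! i), map (frac_var Q Inp i) (snd (Q ! i)))) [0..<length Q]"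

definition frac_inputs :: "('r,'v) cq_atom list \<Rightarrow> 'v set \<Rightarrow> ('v \<times> nat set) set" where
  "frac_inputs Q Inp = {p \<in> qvars (fracture Q Inp). fst p \<in> Inp}"

definition frac_outputs :: "('r,'v) cq_atom list \<Rightarrow> 'v set \<Rightarrow> 'v set \<Rightarrow> ('v \<times> nat set) set" where
  "frac_outputs Q Out Inp = {p \<in> qvars (fracture Q Inp). fst p \<in> Out}"

(* A VO is given by its strict ancestor relation: (Y,X) \<in> anc means Y is a proper
   ancestor of X.  A finite strict order in which the ancestors of every node form a chain
   is exactly a rooted forest. *)
definition is_vo :: "('r,'a) cq_atom list \<Rightarrow> ('a \<times> 'a) set \<Rightarrow> bool" where
  "is_vo Q anc \<longleftrightarrow> anc \<subseteq> qvars Q \<times> qvars Q \<and> trans anc \<and> (\<forall>x. (x,x) \<notin> anc) \<and>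
     (\<forall>x y z. (y,x) \<in> anc \<longrightarrow> (z,x) \<in> anc \<longrightarrow> y = z \<or> (y,z) \<in> anc \<or> (z,y) \<in> anc) \<and>
     (\<forall>j<length Q. \<forall>x\<in>schema Q j. \<forall>y\<in>schema Q j. x = y \<or> (x,y) \<in> anc \<or> (y,x) \<in> anc)"

definition subtree :: "('a \<times> 'a) set \<Rightarrow> 'a \<Rightarrow> 'a set" where
  "subtree anc X = insert X {Y. (X,Y) \<in> anc}"

definition dep :: "('r,'a) cq_atom list \<Rightarrow> ('a \<times> 'a) set \<Rightarrow> 'a \<Rightarrow> 'a set" where
  "dep Q anc X = {Y. (Y,X) \<in> anc \<and>
      (\<exists>j<length Q. Y \<in> schema Q j \<and> schema Q j \<inter> subtree anc X \<noteq> {})}"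

definition dep_set :: "('r,'a) cq_atom list \<Rightarrow> ('a \<times> 'a) set \<Rightarrow> 'a \<Rightarrow> 'a set" where
  "dep_set Q anc X = insert X (dep Q anc X)"

(* original atoms that are leaves of the subtree rooted at X (an atom hangs below its
   lowest variable) *)
definition below :: "('r,'a) cq_atom list \<Rightarrow> ('a \<times> 'a) set \<Rightarrow> 'a \<Rightarrow> nat set" where
  "below Q anc X = {j. j < length Q \<and> schema Q j \<inter> subtree anc X \<noteq> {}}"

(* leaves of the extended VO: Inl j = original atom j; Inr (X,i,Z) = indicator atom
   I_Z R_i(Z) added as a child of variable X *)
type_synonym 'a leaf = "nat + ('a \<times> nat \<times> 'a set)"

definition leaf_schema :: "('r,'a) cq_atom list \<Rightarrow> 'a leaf \<Rightarrow> 'a set" where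
  "leaf_schema Q l = (case l of Inl j \<Rightarrow> schema Q j | Inr (X,i,Z) \<Rightarrow> Z)"

definition gyo_step :: "('l set \<times> ('l \<Rightarrow> 'a set)) \<Rightarrow> ('l set \<times> ('l \<Rightarrow> 'a set)) \<Rightarrow> bool" where
  "gyo_step s s' \<longleftrightarrow>
     (\<exists>v. card {l \<in> fst s. v \<in> snd s l} = 1 \<and> s' = (fst s, \<lambda>l. snd s l - {v})) \<or>
     (\<exists>l\<in>fst s. \<exists>l'\<in>fst s. l \<noteq> l' \<and> snd s l \<subseteq> snd s l' \<and> s' = (fst s - {l}, snd s))"

definition gyo_final :: "('l set \<times> ('l \<Rightarrow> 'a set)) \<Rightarrow> bool" where
  "gyo_final s \<longleftrightarrow> \<not> (\<exists>s'. gyo_step s s')"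

definition gyo_surv :: "'l set \<Rightarrow> ('l \<Rightarrow> 'a set) \<Rightarrow> 'l set" where
  "gyo_surv L E = {l. \<exists>s. gyo_step\<^sup>*\<^sup>* (L,E) s \<and> gyo_final s \<and> l \<in> fst s}"

definition ind_step :: "('r,'a) cq_atom list \<Rightarrow> ('a \<times> 'a) set
     \<Rightarrow> ('a \<Rightarrow> ('a \<times> nat \<times> 'a set) set) \<Rightarrow> 'a \<Rightarrow> ('a \<times> nat \<times> 'a set) set" where
  "ind_step Q anc f X =
    (let S = dep_set Q anc X;
         R = Inl ` below Q anc X \<union> Inr ` (\<Union>Y\<in>{Y. (X,Y) \<in> anc}. f Y);
         C = {(X, i, schema Q i \<inter> S) | i. i < length Q \<and> i \<notin> below Q anc X \<and> schema Q i \<inter> S \<noteq> {}}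
     in {c \<in> C. Inr c \<in> gyo_surv (Inr ` C \<union> R) (leaf_schema Q)})"

(* indicator atoms added as children of X, computed bottom-up *)
definition indicators :: "('r,'a) cq_atom list \<Rightarrow> ('a \<times> 'a) set \<Rightarrow> 'a \<Rightarrow> ('a \<times> nat \<times> 'a set) set" where
  "indicators Q anc = wfrec (anc\<inverse>) (ind_step Q anc)"

(* atoms and indicator atoms at the leaves of the subtree omega_X, i.e. the atoms of Q_X *)
definition QX :: "('r,'a) cq_atom list \<Rightarrow> ('a \<times> 'a) set \<Rightarrow> 'a \<Rightarrow> 'a leaf set" where
  "QX Q anc X = Inl ` below Q anc X \<union> Inr ` (\<Union>Y\<in>subtree anc X. indicators Q anc Y)"

definition rho_star :: "('l \<Rightarrow> 'a set) \<Rightarrow> 'l set \<Rightarrow> 'a set \<Rightarrow> real" where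
  "rho_star E L F = Inf {(\<Sum>e\<in>L. lam e) | lam.
      (\<forall>e\<in>L. 0 \<le> lam e \<and> lam e \<le> 1) \<and> (\<forall>Y\<in>F. (\<Sum>e\<in>{e\<in>L. Y \<in> E e}. lam e) \<ge> 1)}"

definition w_vo :: "('r,'a) cq_atom list \<Rightarrow> ('a \<times> 'a) set \<Rightarrow> real" where
  "w_vo Q anc = Max ((\<lambda>X. rho_star (leaf_schema Q) (QX Q anc X) (dep_set Q anc X)) ` qvars Q)"

definition delta_vo :: "('r,'a) cq_atom list \<Rightarrow> ('a \<times> 'a) set \<Rightarrow> real" where
  "delta_vo Q anc = Max ((\<lambda>X. Max ((\<lambda>e. rho_star (leaf_schema Q) (QX Q anc X)
                                   (dep_set Q anc X - leaf_schema Q e)) ` QX Q anc X)) ` qvars Q)"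

definition access_top :: "'a set \<Rightarrow> 'a set \<Rightarrow> ('a \<times> 'a) set \<Rightarrow> bool" where
  "access_top Out Inp anc \<longleftrightarrow>
     (\<forall>(Y,X)\<in>anc. (X \<in> Out \<union> Inp \<longrightarrow> Y \<in> Out \<union> Inp) \<and> (X \<in> Inp \<longrightarrow> Y \<notin> Out))"

definition access_top_vos :: "('r,'v) cq_atom list \<Rightarrow> 'v set \<Rightarrow> 'v set \<Rightarrow> (('v \<times> nat set) \<times> ('v \<times> nat set)) set set" where
  "access_top_vos Q Out Inp = {anc. is_vo (fracture Q Inp) anc \<and>
       access_top (frac_outputs Q Out Inp) (frac_inputs Q Inp) anc}"

(* (delta(Q), w(Q)): lexicographically smallest (delta, w) over access-top VOs of the fracture *)
definition delta_Q :: "('r,'v) cq_atom list \<Rightarrow> 'v set \<Rightarrow> 'v set \<Rightarrow> real" where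
  "delta_Q Q Out Inp = Min (delta_vo (fracture Q Inp) ` access_top_vos Q Out Inp)"

definition w_Q :: "('r,'v) cq_atom list \<Rightarrow> 'v set \<Rightarrow> 'v set \<Rightarrow> real" where
  "w_Q Q Out Inp = Min (w_vo (fracture Q Inp) `
       {anc \<in> access_top_vos Q Out Inp. delta_vo (fracture Q Inp) anc = delta_Q Q Out Inp})"

end

theory Submission
  imports Defs
begin

text \<open>In a hierarchical query the sets of atoms containing two variables are nested or disjoint.
  This persists inside \<open>Q\<^sub>X\<close> for the variables of \<open>{X} \<union> dep(X)\<close>, indicator atoms included,
  so the atoms covering these variables form a laminar family, whose fractional edge cover number
  is the number of its minimal sets, an integer. Removing the variables of one atom lowers this
  number by at most one (give that atom weight \<open>1\<close>). Hence for every variable order of a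
  hierarchical query the two widths are integers with \<open>\<delta> \<le> w \<le> \<delta> + 1\<close>.\<close>

definition frac_cover :: "'l set \<Rightarrow> 'l set set \<Rightarrow> ('l \<Rightarrow> real) \<Rightarrow> bool" where
  "frac_cover L \<A> lam \<longleftrightarrow> (\<forall>e\<in>L. 0 \<le> lam e \<and> lam e \<le> 1) \<and> (\<forall>S\<in>\<A>. 1 \<le> (\<Sum>e\<in>S. lam e))"

definition frac_cover_number :: "'l set \<Rightarrow> 'l set set \<Rightarrow> real" where
  "frac_cover_number L \<A> = Inf ((\<lambda>lam. \<Sum>e\<in>L. lam e) ` Collect (frac_cover L \<A>))"

definition incidence :: "('l \<Rightarrow> 'a set) \<Rightarrow> 'l set \<Rightarrow> 'a \<Rightarrow> 'l set" where
  "incidence E L Y = {e\<in>L. Y \<in> E e}"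

lemma rho_star_eq_frac_cover_number:
  "rho_star E L F = frac_cover_number L (incidence E L ` F)"
  unfolding rho_star_def frac_cover_number_def frac_cover_def incidence_def
  by (rule arg_cong[where f = Inf]) auto

lemma frac_cover_const_one:
  assumes "finite L" "\<forall>S\<in>\<A>. S \<noteq> {} \<and> S \<subseteq> L"
  shows "frac_cover L \<A> (\<lambda>_. 1)"
  unfolding frac_cover_def
proof (intro conjI ballI)
  fix S assume "S \<in> \<A>"
  with assms have "finite S" "S \<noteq> {}" by (auto intro: finite_subset)
  then show "1 \<le> (\<Sum>e\<in>S. 1::real)" by (simp add: Suc_le_eq card_gt_0_iff)
qed auto

lemma bdd_below_frac_cover_sums:
  "bdd_below ((\<lambda>lam. \<Sum>e\<in>L. lam e) ` Collect (frac_cover L \<A>))"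
  unfolding frac_cover_def by (rule bdd_belowI[of _ 0]) (auto intro: sum_nonneg)

lemma frac_cover_number_le:
  "frac_cover L \<A> lam \<Longrightarrow> frac_cover_number L \<A> \<le> (\<Sum>e\<in>L. lam e)"
  unfolding frac_cover_number_def by (rule cInf_lower) (auto simp: bdd_below_frac_cover_sums)

lemma frac_cover_number_mono:
  assumes "finite L" "\<forall>S\<in>\<B>. S \<noteq> {} \<and> S \<subseteq> L" "\<A> \<subseteq> \<B>"
  shows "frac_cover_number L \<A> \<le> frac_cover_number L \<B>"
  unfolding frac_cover_number_def
proof (rule cInf_superset_mono)
  show "(\<lambda>lam. \<Sum>e\<in>L. lam e) ` Collect (frac_cover L \<B>) \<noteq> {}"
    using frac_cover_const_one[OF assms(1,2)] by blast
  show "(\<lambda>lam. \<Sum>e\<in>L. lam e) ` Collect (frac_cover L \<B>) \<subseteq> (\<lambda>lam. \<Sum>e\<in>L. lam e) ` Collect (frac_cover L \<A>)"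
    using assms(3) unfolding frac_cover_def by blast
qed (rule bdd_below_frac_cover_sums)

lemma frac_cover_raise_edge:
  assumes "finite L" "\<forall>S\<in>\<A>. S \<subseteq> L" "e\<^sub>0 \<in> L" and cov: "frac_cover L {S\<in>\<A>. e\<^sub>0 \<notin> S} lam"
  shows "frac_cover L \<A> (lam(e\<^sub>0 := 1))"
  unfolding frac_cover_def
proof (intro conjI ballI)
  fix S assume S: "S \<in> \<A>"
  show "1 \<le> (\<Sum>e\<in>S. (lam(e\<^sub>0 := 1)) e)"
  proof (cases "e\<^sub>0 \<in> S")
    case True
    have "finite S" using S assms(1,2) finite_subset by blast
    have "(lam(e\<^sub>0 := 1)) e\<^sub>0 \<le> (\<Sum>e\<in>S. (lam(e\<^sub>0 := 1)) e)"
      by (rule member_le_sum) (use True S \<open>finite S\<close> assms(2) cov in \<open>auto simp: frac_cover_def\<close>)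
    then show ?thesis by simp
  next
    case False
    then have "(\<Sum>e\<in>S. (lam(e\<^sub>0 := 1)) e) = (\<Sum>e\<in>S. lam e)" by (intro sum.cong) auto
    then show ?thesis using cov S False unfolding frac_cover_def by auto
  qed
qed (use cov in \<open>auto simp: frac_cover_def\<close>)

lemma frac_cover_number_le_avoiding_plus_one:
  assumes "finite L" "\<forall>S\<in>\<A>. S \<noteq> {} \<and> S \<subseteq> L" "e\<^sub>0 \<in> L"
  shows "frac_cover_number L \<A> \<le> frac_cover_number L {S\<in>\<A>. e\<^sub>0 \<notin> S} + 1"
proof -
  have "frac_cover_number L \<A> - 1 \<le> frac_cover_number L {S\<in>\<A>. e\<^sub>0 \<notin> S}"
    unfolding frac_cover_number_def[of L "{S\<in>\<A>. e\<^sub>0 \<notin> S}"]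
  proof (rule cInf_greatest)
    show "(\<lambda>lam. \<Sum>e\<in>L. lam e) ` Collect (frac_cover L {S\<in>\<A>. e\<^sub>0 \<notin> S}) \<noteq> {}"
      using frac_cover_const_one[OF assms(1), of "{S\<in>\<A>. e\<^sub>0 \<notin> S}"] assms(2) by blast
  next
    fix x assume "x \<in> (\<lambda>lam. \<Sum>e\<in>L. lam e) ` Collect (frac_cover L {S\<in>\<A>. e\<^sub>0 \<notin> S})"
    then obtain lam where cov: "frac_cover L {S\<in>\<A>. e\<^sub>0 \<notin> S} lam" and x: "x = (\<Sum>e\<in>L. lam e)"
      by blast
    have "frac_cover_number L \<A> \<le> (\<Sum>e\<in>L. (lam(e\<^sub>0 := 1)) e)"
      using frac_cover_raise_edge[OF assms(1) _ assms(3) cov] assms(2)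
      by (intro frac_cover_number_le) blast
    also have "\<dots> = (\<Sum>e\<in>L. lam e) - lam e\<^sub>0 + 1"
      using assms(1,3) by (simp add: sum.remove)
    also have "\<dots> \<le> x + 1" using cov assms(3) x unfolding frac_cover_def by auto
    finally show "frac_cover_number L \<A> - 1 \<le> x" by simp
  qed
  then show ?thesis by linarith
qed

definition laminar :: "'a set set \<Rightarrow> bool" where
  "laminar \<A> \<longleftrightarrow> (\<forall>S\<in>\<A>. \<forall>T\<in>\<A>. S \<subseteq> T \<or> T \<subseteq> S \<or> S \<inter> T = {})"

definition minimal_sets :: "'a set set \<Rightarrow> 'a set set" where
  "minimal_sets \<A> = {S\<in>\<A>. \<forall>T\<in>\<A>. T \<subseteq> S \<longrightarrow> T = S}"

lemma laminar_subset: "laminar \<B> \<Longrightarrow> \<A> \<subseteq> \<B> \<Longrightarrow> laminar \<A>"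
  unfolding laminar_def by blast

lemma laminar_minimal_sets_disjoint:
  assumes "laminar \<A>" "S \<in> minimal_sets \<A>" "T \<in> minimal_sets \<A>" "S \<noteq> T"
  shows "S \<inter> T = {}"
proof -
  have "S \<in> \<A>" "T \<in> \<A>" "\<not> S \<subseteq> T" "\<not> T \<subseteq> S"
    using assms(2-4) unfolding minimal_sets_def by auto
  then show ?thesis using assms(1) unfolding laminar_def by blast
qed

lemma minimal_sets_below:
  assumes "finite \<A>" "S \<in> \<A>"
  obtains M where "M \<in> minimal_sets \<A>" "M \<subseteq> S"
proof -
  obtain M where M: "M \<in> \<A>" "M \<subseteq> S" "\<forall>T\<in>\<A>. T \<subseteq> M \<longrightarrow> M = T"
    using finite_has_minimal2[OF assms] by blast
  then have "M \<in> minimal_sets \<A>" unfolding minimal_sets_def by auto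
  then show ?thesis using M(2) by (rule that)
qed

lemma disjoint_family_transversal:
  fixes \<M> :: "'a set set"
  assumes "\<forall>S\<in>\<M>. S \<noteq> {}" "\<forall>S\<in>\<M>. \<forall>T\<in>\<M>. S \<noteq> T \<longrightarrow> S \<inter> T = {}"
  obtains P where "P \<subseteq> \<Union>\<M>" "card P = card \<M>" "\<forall>S\<in>\<M>. S \<inter> P \<noteq> {}"
proof -
  define pick :: "'a set \<Rightarrow> 'a" where "pick S = (SOME e. e \<in> S)" for S
  have pick: "pick S \<in> S" if "S \<in> \<M>" for S
    unfolding pick_def using assms(1) that by (simp add: some_in_eq)
  have "inj_on pick \<M>"
  proof (rule inj_onI)
    fix S T assume "S \<in> \<M>" "T \<in> \<M>" "pick S = pick T"
    then show "S = T" using pick[of S] pick[of T] assms(2) by auto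
  qed
  then have "card (pick ` \<M>) = card \<M>" by (rule card_image)
  moreover have "pick ` \<M> \<subseteq> \<Union>\<M>" "\<forall>S\<in>\<M>. S \<inter> pick ` \<M> \<noteq> {}" using pick by auto
  ultimately show ?thesis using that by blast
qed

lemma card_le_sum_over_disjoint_sets:
  fixes lam :: "'l \<Rightarrow> real"
  assumes "finite L" "\<forall>e\<in>L. 0 \<le> lam e" "\<forall>S\<in>\<M>. S \<subseteq> L \<and> 1 \<le> (\<Sum>e\<in>S. lam e)"
    and "\<forall>S\<in>\<M>. \<forall>T\<in>\<M>. S \<noteq> T \<longrightarrow> S \<inter> T = {}"
  shows "real (card \<M>) \<le> (\<Sum>e\<in>L. lam e)"
proof -
  have fin: "\<forall>S\<in>\<M>. finite S" using assms(1,3) finite_subset by blast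
  have "real (card \<M>) = (\<Sum>S\<in>\<M>. 1)" by simp
  also have "\<dots> \<le> (\<Sum>S\<in>\<M>. \<Sum>e\<in>S. lam e)" by (rule sum_mono) (use assms(3) in blast)
  also have "\<dots> = (\<Sum>e\<in>\<Union>\<M>. lam e)" using sum.Union_disjoint[OF fin assms(4), of lam] by simp
  also have "\<dots> \<le> (\<Sum>e\<in>L. lam e)" by (rule sum_mono2) (use assms in auto)
  finally show ?thesis .
qed

lemma frac_cover_indicator_hitting_minimal_sets:
  assumes "finite L" "\<forall>S\<in>\<A>. S \<subseteq> L" "P \<subseteq> L" "\<forall>M\<in>minimal_sets \<A>. M \<inter> P \<noteq> {}"
  shows "frac_cover L \<A> (\<lambda>e. of_bool (e \<in> P))"
  unfolding frac_cover_def
proof (intro conjI ballI)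
  fix S assume S: "S \<in> \<A>"
  have "\<A> \<subseteq> Pow L" using assms(2) by blast
  then have "finite \<A>" using assms(1) finite_subset by blast
  then obtain M where "M \<in> minimal_sets \<A>" "M \<subseteq> S" using S by (rule minimal_sets_below)
  then obtain e where "e \<in> S" "e \<in> P" using assms(4) by blast
  moreover have "finite S" using S assms(1,2) finite_subset by blast
  ultimately show "1 \<le> (\<Sum>e\<in>S. of_bool (e \<in> P) :: real)"
    using member_le_sum[of e S "\<lambda>e. of_bool (e \<in> P) :: real"] by simp
qed auto

text \<open>The minimal sets of a laminar family are pairwise disjoint, so each needs weight \<open>1\<close> of
  its own, while one edge from each of them already covers every set of the family.\<close>

lemma frac_cover_number_laminar:
  assumes L: "finite L" and A: "\<forall>S\<in>\<A>. S \<noteq> {} \<and> S \<subseteq> L" and lam: "laminar \<A>"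
  shows "frac_cover_number L \<A> = card (minimal_sets \<A>)"
  unfolding frac_cover_number_def
proof (rule cInf_eq_minimum)
  have min: "minimal_sets \<A> \<subseteq> \<A>" unfolding minimal_sets_def by blast
  then have "\<forall>M\<in>minimal_sets \<A>. M \<noteq> {}" using A by blast
  then obtain P where P: "P \<subseteq> \<Union>(minimal_sets \<A>)" "card P = card (minimal_sets \<A>)"
    "\<forall>M\<in>minimal_sets \<A>. M \<inter> P \<noteq> {}"
    using disjoint_family_transversal laminar_minimal_sets_disjoint[OF lam] by metis
  have PL: "P \<subseteq> L" using P(1) min A by blast
  then have "L \<inter> {e. e \<in> P} = P" by blast
  then have "(\<Sum>e\<in>L. of_bool (e \<in> P) :: real) = card (minimal_sets \<A>)" using L P(2) by simp
  with frac_cover_indicator_hitting_minimal_sets[OF L _ PL P(3)] A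
  show "real (card (minimal_sets \<A>)) \<in> (\<lambda>lam. \<Sum>e\<in>L. lam e) ` Collect (frac_cover L \<A>)"
    by (intro image_eqI[where x = "\<lambda>e. of_bool (e \<in> P)"]) auto
next
  fix x assume "x \<in> (\<lambda>lam. \<Sum>e\<in>L. lam e) ` Collect (frac_cover L \<A>)"
  then obtain lam where cov: "frac_cover L \<A> lam" and x: "x = (\<Sum>e\<in>L. lam e)" by blast
  have "\<forall>e\<in>L. 0 \<le> lam e" using cov unfolding frac_cover_def by blast
  moreover have "\<forall>M\<in>minimal_sets \<A>. M \<subseteq> L \<and> 1 \<le> (\<Sum>e\<in>M. lam e)"
    using cov A unfolding frac_cover_def minimal_sets_def by blast
  ultimately show "real (card (minimal_sets \<A>)) \<le> x"
    unfolding x using laminar_minimal_sets_disjoint[OF lam]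
    by (intro card_le_sum_over_disjoint_sets[OF L]) blast+
qed

lemma rho_star_mono:
  assumes "finite L" "\<forall>A\<in>G. incidence E L A \<noteq> {}" "F \<subseteq> G"
  shows "rho_star E L F \<le> rho_star E L G"
  unfolding rho_star_eq_frac_cover_number
  by (rule frac_cover_number_mono) (use assms in \<open>auto simp: incidence_def\<close>)

lemma rho_star_le_diff_plus_one:
  assumes "finite L" "\<forall>A\<in>F. incidence E L A \<noteq> {}" "e\<^sub>0 \<in> L"
  shows "rho_star E L F \<le> rho_star E L (F - E e\<^sub>0) + 1"
proof -
  have "incidence E L ` (F - E e\<^sub>0) = {S \<in> incidence E L ` F. e\<^sub>0 \<notin> S}"
    using assms(3) by (auto simp: incidence_def)
  then show ?thesis
    unfolding rho_star_eq_frac_cover_number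
    using frac_cover_number_le_avoiding_plus_one[OF assms(1) _ assms(3), of "incidence E L ` F"] assms(2)
    by (auto simp: incidence_def)
qed

lemma rho_star_laminar_in_Ints:
  assumes "finite L" "\<forall>A\<in>F. incidence E L A \<noteq> {}" "laminar (incidence E L ` F)"
  shows "rho_star E L F \<in> \<int>"
proof -
  have "rho_star E L F = card (minimal_sets (incidence E L ` F))"
    unfolding rho_star_eq_frac_cover_number
    by (rule frac_cover_number_laminar) (use assms in \<open>auto simp: incidence_def\<close>)
  then show ?thesis by simp
qed

lemma finite_qvars: "finite (qvars Q)"
  unfolding qvars_def schema_def by auto

lemma is_vo_wf_converse:
  assumes "is_vo Q anc"
  shows "wf (anc\<inverse>)"
proof (rule finite_acyclic_wf_converse)
  have "anc \<subseteq> qvars Q \<times> qvars Q" using assms unfolding is_vo_def by blast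
  then show "finite anc" using finite_qvars finite_subset by blast
  have "trans anc" "\<forall>x. (x, x) \<notin> anc" using assms unfolding is_vo_def by blast+
  then show "acyclic anc" unfolding acyclic_def by (simp add: trancl_id)
qed

lemma indicators_subset:
  assumes "is_vo Q anc"
  shows "indicators Q anc Y \<subseteq> (\<lambda>i. (Y, i, schema Q i \<inter> dep_set Q anc Y)) ` {..<length Q}"
proof -
  have "indicators Q anc Y = ind_step Q anc (cut (indicators Q anc) (anc\<inverse>) Y) Y"
    unfolding indicators_def by (rule wfrec[OF is_vo_wf_converse[OF assms]])
  then show ?thesis unfolding ind_step_def Let_def by auto
qed

lemma finite_subtree:
  assumes "is_vo Q anc"
  shows "finite (subtree anc X)"
proof -
  have "anc \<subseteq> qvars Q \<times> qvars Q" using assms unfolding is_vo_def by blast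
  then have "subtree anc X \<subseteq> insert X (qvars Q)" unfolding subtree_def by auto
  then show ?thesis using finite_qvars finite_subset by blast
qed

lemma finite_QX:
  assumes "is_vo Q anc"
  shows "finite (QX Q anc X)"
  using finite_subset[OF indicators_subset[OF assms]] finite_subtree[OF assms]
  unfolding QX_def below_def by auto

lemma QX_cases:
  assumes "is_vo Q anc" "e \<in> QX Q anc X"
  obtains (atom) j where "j \<in> below Q anc X" "e = Inl j" "leaf_schema Q e = schema Q j"
  | (indicator) Y i where "Y \<in> subtree anc X" "i < length Q"
      "e = Inr (Y, i, schema Q i \<inter> dep_set Q anc Y)" "leaf_schema Q e = schema Q i \<inter> dep_set Q anc Y"
proof -
  consider (atom) j where "j \<in> below Q anc X" "e = Inl j"
    | (indicator) Y c where "Y \<in> subtree anc X" "c \<in> indicators Q anc Y" "e = Inr c"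
    using assms(2) unfolding QX_def by blast
  then show ?thesis
  proof cases
    case atom
    then show ?thesis using that(1) by (simp add: leaf_schema_def)
  next
    case indicator
    then obtain i where "i < length Q" "c = (Y, i, schema Q i \<inter> dep_set Q anc Y)"
      using indicators_subset[OF assms(1)] by blast
    then show ?thesis using that(2)[of Y i] indicator by (simp add: leaf_schema_def)
  qed
qed

lemma incidence_QX_nonempty:
  assumes "X \<in> qvars Q" "A \<in> dep_set Q anc X"
  shows "incidence (leaf_schema Q) (QX Q anc X) A \<noteq> {}"
proof -
  obtain j where "j < length Q" "A \<in> schema Q j" "schema Q j \<inter> subtree anc X \<noteq> {}"
  proof (cases "A = X")
    case True
    then show ?thesis using that assms(1) unfolding qvars_def subtree_def by auto
  next
    case False
    then show ?thesis using that assms(2) unfolding dep_set_def dep_def by auto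
  qed
  then have "Inl j \<in> QX Q anc X" "A \<in> leaf_schema Q (Inl j)"
    unfolding QX_def below_def leaf_schema_def by auto
  then show ?thesis unfolding incidence_def by blast
qed

text \<open>A variable of \<open>dep_set Q anc X\<close> lies on or above \<open>X\<close>, so it is a proper ancestor of every
  strict descendant \<open>Y\<close>; the atoms witnessing \<open>A \<in> dep_set Q anc Y\<close> then witness it for \<open>B\<close> too.\<close>

lemma dep_set_inherit:
  assumes vo: "is_vo Q anc" and A: "A \<in> dep_set Q anc X" and B: "B \<in> dep_set Q anc X"
    and Y: "Y \<in> subtree anc X" and AY: "A \<in> dep_set Q anc Y"
    and atoms: "atoms_of Q A \<subseteq> atoms_of Q B"
  shows "B \<in> dep_set Q anc Y"
proof (cases "Y = X")
  case True
  then show ?thesis using B by simp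
next
  case False
  have trans: "trans anc" and irrefl: "\<forall>x. (x, x) \<notin> anc" using vo unfolding is_vo_def by blast+
  have XY: "(X, Y) \<in> anc" using Y False unfolding subtree_def by auto
  have "B = X \<or> (B, X) \<in> anc" using B unfolding dep_set_def dep_def by auto
  then have BY: "(B, Y) \<in> anc" using XY trans by (auto dest: transD)
  have AX: "A = X \<or> (A, X) \<in> anc" using A unfolding dep_set_def dep_def by auto
  have "A \<noteq> Y"
  proof
    assume "A = Y"
    with AX False have "(Y, X) \<in> anc" by blast
    with XY trans have "(X, X) \<in> anc" by (blast dest: transD)
    with irrefl show False by blast
  qed
  with AY have "A \<in> dep Q anc Y" unfolding dep_set_def by blast
  then obtain j where j: "j < length Q" "A \<in> schema Q j" "schema Q j \<inter> subtree anc Y \<noteq> {}"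
    unfolding dep_def by blast
  then have "j \<in> atoms_of Q A" unfolding atoms_of_def by blast
  then have "B \<in> schema Q j" using atoms unfolding atoms_of_def by blast
  then have "B \<in> dep Q anc Y" using BY j unfolding dep_def by blast
  then show ?thesis by (simp add: dep_set_def)
qed

lemma incidence_QX_mono:
  assumes vo: "is_vo Q anc" and A: "A \<in> dep_set Q anc X" and B: "B \<in> dep_set Q anc X"
    and atoms: "atoms_of Q A \<subseteq> atoms_of Q B"
  shows "incidence (leaf_schema Q) (QX Q anc X) A \<subseteq> incidence (leaf_schema Q) (QX Q anc X) B"
proof
  fix e assume "e \<in> incidence (leaf_schema Q) (QX Q anc X) A"
  then have e: "e \<in> QX Q anc X" "A \<in> leaf_schema Q e" unfolding incidence_def by auto
  from vo e(1) have "B \<in> leaf_schema Q e"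
  proof (cases rule: QX_cases)
    case (atom j)
    then show ?thesis using e(2) atoms unfolding atoms_of_def below_def by auto
  next
    case (indicator Y i)
    then have "B \<in> schema Q i" using e(2) atoms unfolding atoms_of_def by auto
    moreover have "B \<in> dep_set Q anc Y"
      using dep_set_inherit[OF vo A B indicator(1) _ atoms] indicator e(2) by auto
    ultimately show ?thesis using indicator by auto
  qed
  then show "e \<in> incidence (leaf_schema Q) (QX Q anc X) B" using e(1) unfolding incidence_def by auto
qed

lemma incidence_QX_disjoint:
  assumes vo: "is_vo Q anc" and atoms: "atoms_of Q A \<inter> atoms_of Q B = {}"
  shows "incidence (leaf_schema Q) (QX Q anc X) A \<inter> incidence (leaf_schema Q) (QX Q anc X) B = {}"
proof -
  have "\<not> (A \<in> leaf_schema Q e \<and> B \<in> leaf_schema Q e)" if "e \<in> QX Q anc X" for e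
    using vo that
  proof (cases rule: QX_cases)
    case (atom j)
    then show ?thesis using atoms unfolding atoms_of_def below_def by auto
  next
    case (indicator Y i)
    then show ?thesis using atoms unfolding atoms_of_def by auto
  qed
  then show ?thesis unfolding incidence_def by auto
qed

lemma laminar_incidence_QX:
  assumes vo: "is_vo Q anc" and hier: "hierarchical Q"
  shows "laminar (incidence (leaf_schema Q) (QX Q anc X) ` dep_set Q anc X)"
  unfolding laminar_def
proof (intro ballI)
  fix S T assume "S \<in> incidence (leaf_schema Q) (QX Q anc X) ` dep_set Q anc X"
    "T \<in> incidence (leaf_schema Q) (QX Q anc X) ` dep_set Q anc X"
  then obtain A B where A: "A \<in> dep_set Q anc X" and B: "B \<in> dep_set Q anc X"
    and S: "S = incidence (leaf_schema Q) (QX Q anc X) A"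
    and T: "T = incidence (leaf_schema Q) (QX Q anc X) B"
    by blast
  have "atoms_of Q A \<subseteq> atoms_of Q B \<or> atoms_of Q B \<subseteq> atoms_of Q A \<or> atoms_of Q A \<inter> atoms_of Q B = {}"
    using hier unfolding hierarchical_def by blast
  then show "S \<subseteq> T \<or> T \<subseteq> S \<or> S \<inter> T = {}"
    unfolding S T
    using incidence_QX_mono[OF vo A B] incidence_QX_mono[OF vo B A]
      incidence_QX_disjoint[OF vo, of A B X]
    by blast
qed

lemma rho_star_QX_in_Ints:
  assumes vo: "is_vo Q anc" and hier: "hierarchical Q" and X: "X \<in> qvars Q"
    and F: "F \<subseteq> dep_set Q anc X"
  shows "rho_star (leaf_schema Q) (QX Q anc X) F \<in> \<int>"
proof (rule rho_star_laminar_in_Ints)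
  show "finite (QX Q anc X)" by (rule finite_QX[OF vo])
  show "\<forall>A\<in>F. incidence (leaf_schema Q) (QX Q anc X) A \<noteq> {}"
    using incidence_QX_nonempty[OF X] F by blast
  show "laminar (incidence (leaf_schema Q) (QX Q anc X) ` F)"
    using laminar_incidence_QX[OF vo hier] F by (rule laminar_subset[OF _ image_mono])
qed

lemma rho_star_QX_delta_bounds:
  assumes vo: "is_vo Q anc" and hier: "hierarchical Q" and X: "X \<in> qvars Q"
  defines "w \<equiv> rho_star (leaf_schema Q) (QX Q anc X) (dep_set Q anc X)"
    and "d \<equiv> Max ((\<lambda>e. rho_star (leaf_schema Q) (QX Q anc X) (dep_set Q anc X - leaf_schema Q e))
                    ` QX Q anc X)"
  shows "d \<in> \<int> \<and> w \<in> \<int> \<and> d \<le> w \<and> w \<le> d + 1"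
proof -
  have fin: "finite (QX Q anc X)" by (rule finite_QX[OF vo])
  have nonempty: "\<forall>A\<in>dep_set Q anc X. incidence (leaf_schema Q) (QX Q anc X) A \<noteq> {}"
    using incidence_QX_nonempty[OF X] by blast
  then have "incidence (leaf_schema Q) (QX Q anc X) X \<noteq> {}" unfolding dep_set_def by blast
  then have "QX Q anc X \<noteq> {}" unfolding incidence_def by blast
  then have "d \<in> (\<lambda>e. rho_star (leaf_schema Q) (QX Q anc X) (dep_set Q anc X - leaf_schema Q e))
                    ` QX Q anc X"
    unfolding d_def using fin by (intro Max_in) auto
  then obtain e where e: "e \<in> QX Q anc X"
    and d: "d = rho_star (leaf_schema Q) (QX Q anc X) (dep_set Q anc X - leaf_schema Q e)"
    by blast
  have "d \<in> \<int>" unfolding d by (rule rho_star_QX_in_Ints[OF vo hier X]) blast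
  moreover have "w \<in> \<int>" unfolding w_def by (rule rho_star_QX_in_Ints[OF vo hier X]) blast
  moreover have "d \<le> w" unfolding d w_def by (rule rho_star_mono[OF fin nonempty]) blast
  moreover have "w \<le> d + 1" unfolding d w_def by (rule rho_star_le_diff_plus_one[OF fin nonempty e])
  ultimately show ?thesis by blast
qed

lemma Ints_eq_or_eq_minus_one:
  fixes a b :: real
  assumes "a \<in> \<int>" "b \<in> \<int>" "a \<le> b" "b \<le> a + 1"
  shows "a = b \<or> a = b - 1"
proof -
  obtain i j where "a = of_int i" "b = of_int j" using assms(1,2) Ints_cases by metis
  with assms(3,4) show ?thesis by auto
qed

lemma Max_image_eq_or_eq_minus_one:
  fixes d w :: "'a \<Rightarrow> real"
  assumes fin: "finite S" and bounds: "\<And>x. x \<in> S \<Longrightarrow> d x \<in> \<int> \<and> w x \<in> \<int> \<and> d x \<le> w x \<and> w x \<le> d x + 1"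
  shows "Max (d ` S) = Max (w ` S) \<or> Max (d ` S) = Max (w ` S) - 1"
proof (cases "S = {}")
  case False
  have "Max (d ` S) \<in> d ` S" "Max (w ` S) \<in> w ` S" using fin False by (intro Max_in; simp)+
  then obtain x y where x: "x \<in> S" "Max (d ` S) = d x" and y: "y \<in> S" "Max (w ` S) = w y"
    by (metis imageE)
  have "d x \<le> w x" "w y \<le> d y + 1" using bounds x(1) y(1) by auto
  moreover have "w x \<le> Max (w ` S)" "d y \<le> Max (d ` S)" using fin x(1) y(1) by auto
  ultimately have "Max (d ` S) \<le> Max (w ` S)" "Max (w ` S) \<le> Max (d ` S) + 1"
    using x(2) y(2) by linarith+
  moreover have "Max (d ` S) \<in> \<int>" "Max (w ` S) \<in> \<int>" using bounds x y by auto
  ultimately show ?thesis using Ints_eq_or_eq_minus_one by blast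
qed simp \<comment> \<open>for \<open>S = {}\<close> both sides are the junk value \<open>Max {}\<close>\<close>

lemma delta_vo_eq_w_vo_or_minus_one:
  assumes "is_vo Q anc" "hierarchical Q"
  shows "delta_vo Q anc = w_vo Q anc \<or> delta_vo Q anc = w_vo Q anc - 1"
  unfolding delta_vo_def w_vo_def
  by (rule Max_image_eq_or_eq_minus_one[OF finite_qvars rho_star_QX_delta_bounds[OF assms]])

lemma finite_access_top_vos: "finite (access_top_vos Q Out Inp)"
proof (rule finite_subset)
  show "access_top_vos Q Out Inp \<subseteq> Pow (qvars (fracture Q Inp) \<times> qvars (fracture Q Inp))"
    unfolding access_top_vos_def is_vo_def by auto
qed (simp add: finite_qvars)

lemma w_Q_attained:
  assumes "access_top_vos Q Out Inp \<noteq> {}"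
  obtains anc where "anc \<in> access_top_vos Q Out Inp"
    "delta_vo (fracture Q Inp) anc = delta_Q Q Out Inp" "w_vo (fracture Q Inp) anc = w_Q Q Out Inp"
proof -
  let ?T = "{anc \<in> access_top_vos Q Out Inp. delta_vo (fracture Q Inp) anc = delta_Q Q Out Inp}"
  have "delta_Q Q Out Inp \<in> delta_vo (fracture Q Inp) ` access_top_vos Q Out Inp"
    unfolding delta_Q_def by (rule Min_in) (use finite_access_top_vos assms in auto)
  then have "?T \<noteq> {}" by auto
  moreover have "finite ?T" by (rule finite_subset[OF _ finite_access_top_vos]) blast
  ultimately have "w_Q Q Out Inp \<in> w_vo (fracture Q Inp) ` ?T"
    unfolding w_Q_def by (intro Min_in) auto
  then obtain anc where "anc \<in> ?T" "w_Q Q Out Inp = w_vo (fracture Q Inp) anc" by (rule imageE)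
  then show ?thesis using that by auto
qed

theorem proposition3p8:
  fixes Q :: "('r,'v) cq_atom list" and Out Inp :: "'v set"
  assumes "cqap Q Out Inp"
    and "hierarchical (fracture Q Inp)"
  shows "delta_Q Q Out Inp = w_Q Q Out Inp \<or> delta_Q Q Out Inp = w_Q Q Out Inp - 1"
proof (cases "access_top_vos Q Out Inp = {}")
  case True
  \<comment> \<open>both sides are then the same junk value \<open>Min {}\<close>\<close>
  then show ?thesis unfolding delta_Q_def w_Q_def by simp
next
  case False
  then obtain anc where anc: "anc \<in> access_top_vos Q Out Inp"
    "delta_vo (fracture Q Inp) anc = delta_Q Q Out Inp" "w_vo (fracture Q Inp) anc = w_Q Q Out Inp"
    by (rule w_Q_attained)
  then have "is_vo (fracture Q Inp) anc" unfolding access_top_vos_def by blast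
  from delta_vo_eq_w_vo_or_minus_one[OF this assms(2)] show ?thesis unfolding anc(2,3) .
qed

end
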